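(* Let $\mathcal{H}$ be the directed hypergraph on $\{1,2,3\}$ with hyperedges $$\mathcal{E}^{(2)}=\{(\{2\},\{1\}),(\{1\},\{2\}),(\{2\},\{3\})\},\qquad \mathcal{E}^{(3)}=\{(\{2,3\},\{1\}),(\{1,3\},\{2\}),(\{1,2\},\{3\})\},$$ and no hyperedges of other orders, so that the network dynamical system with homogeneous coupling reads $$\dot x_1=F(x_1)+G^{(2)}(x_1;x_2)+G^{(3)}(x_1;x_2,x_3),\ \ \dot x_2=F(x_2)+G^{(2)}(x_2;x_1)+G^{(3)}(x_2;x_1,x_3),\ \ \dot x_3=F(x_3)+G^{(2)}(x_3;x_2)+G^{(3)}(x_3;x_1,x_2).$$ For every choice of $F,G^{(2)},G^{(3)}$ the subspaces $\Delta$, $S_2$, $S_3$ are dynamically invariant. Moreover, there exist smooth $F$, $G^{(2)}$, $G^{(3)}$ (with $G^{(3)}$ symmetric in its last two arguments) such that this system realizes the Field cycle: it has two distinct hyperbolic equilibria $\xi_1,\xi_2\in\Delta$, a heteroclinic trajectory from $\xi_1$ to $\xi_2$ contained in $S_2\setminus\Delta$ and a heteroclinic trajectory from $\xi_2$ to $\xi_1$ contained in $S_3\setminus\Delta$.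
   Context: $\Delta=\{x_1=x_2=x_3\}$, $S_1=\{x_2=x_3\}$, $S_2=\{x_1=x_3\}$, $S_3=\{x_1=x_2\}$ in $\mathbb{R}^3$. $F:\mathbb R\to\mathbb R$, $G^{(2)}:\mathbb R^2\to\mathbb R$, $G^{(3)}:\mathbb R^3\to\mathbb R$ are smooth, each coupling function depending nontrivially on its tail (non-first) arguments. A heteroclinic trajectory from $\xi$ to $\xi'$ is a solution $x(t)$, $t\in\mathbb R$, with $x(t)\to\xi$ as $t\to-\infty$ and $x(t)\to\xi'$ as $t\to+\infty$. An equilibrium is hyperbolic if its Jacobian has no eigenvalue with zero real part. *)

theory Defs
  imports "HOL-Analysis.Analysis"
begin

text \<open>Smoothness (C-infinity): there is a family of continuous functions containing f
  and closed under taking all partial derivatives (along basis directions).\<close>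
definition smooth_fun :: "('a::euclidean_space \<Rightarrow> real) \<Rightarrow> bool" where
  "smooth_fun f \<longleftrightarrow> (\<exists>S. f \<in> S \<and>
     (\<forall>g\<in>S. continuous_on UNIV g \<and>
        (\<forall>b\<in>Basis. \<exists>g'\<in>S. \<forall>x. ((\<lambda>t. g (x + t *\<^sub>R b)) has_real_derivative g' x) (at 0))))"

type_synonym state = "real ^ 3"

definition Diag :: "state set" where
  "Diag = {x. x$1 = x$2 \<and> x$2 = x$3}"
definition S1 :: "state set" where "S1 = {x. x$2 = x$3}"
definition S2 :: "state set" where "S2 = {x. x$1 = x$3}"
definition S3 :: "state set" where "S3 = {x. x$1 = x$2}"

definition hvf :: "(real \<Rightarrow> real) \<Rightarrow> (real \<Rightarrow> real \<Rightarrow> real) \<Rightarrow> (real \<Rightarrow> real \<Rightarrow> real \<Rightarrow> real)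
    \<Rightarrow> state \<Rightarrow> state" where
  "hvf F G2 G3 x = vector
     [F (x$1) + G2 (x$1) (x$2) + G3 (x$1) (x$2) (x$3),
      F (x$2) + G2 (x$2) (x$1) + G3 (x$2) (x$1) (x$3),
      F (x$3) + G2 (x$3) (x$2) + G3 (x$3) (x$1) (x$2)]"

definition dyn_invariant :: "(state \<Rightarrow> state) \<Rightarrow> state set \<Rightarrow> bool" where
  "dyn_invariant V S \<longleftrightarrow> (\<forall>x\<in>S. V x \<in> S)"

definition is_eigenvalue :: "real^3^3 \<Rightarrow> complex \<Rightarrow> bool" where
  "is_eigenvalue J mu \<longleftrightarrow> (\<exists>v::complex^3. v \<noteq> 0 \<and>
      (\<chi> i j. complex_of_real (J$i$j)) *v v = mu *s v)"

definition hyperbolic_equilibrium :: "(state \<Rightarrow> state) \<Rightarrow> state \<Rightarrow> bool" where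
  "hyperbolic_equilibrium V \<xi> \<longleftrightarrow> V \<xi> = 0 \<and>
     (\<exists>J. (V has_derivative (\<lambda>h. J *v h)) (at \<xi>) \<and>
          (\<forall>mu. is_eigenvalue J mu \<longrightarrow> Re mu \<noteq> 0))"

definition is_solution :: "(state \<Rightarrow> state) \<Rightarrow> (real \<Rightarrow> state) \<Rightarrow> bool" where
  "is_solution V x \<longleftrightarrow> (\<forall>t. (x has_vector_derivative V (x t)) (at t))"

definition heteroclinic :: "(state \<Rightarrow> state) \<Rightarrow> state \<Rightarrow> state \<Rightarrow> (real \<Rightarrow> state) \<Rightarrow> bool" where
  "heteroclinic V \<xi> \<xi>' x \<longleftrightarrow> is_solution V x \<and>
     (x \<longlongrightarrow> \<xi>) at_bot \<and> (x \<longlongrightarrow> \<xi>') at_top"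

definition admissible :: "(real \<Rightarrow> real) \<Rightarrow> (real \<Rightarrow> real \<Rightarrow> real) \<Rightarrow> (real \<Rightarrow> real \<Rightarrow> real \<Rightarrow> real) \<Rightarrow> bool" where
  "admissible F G2 G3 \<longleftrightarrow>
     smooth_fun F \<and> smooth_fun (\<lambda>p::real^2. G2 (p$1) (p$2)) \<and>
     smooth_fun (\<lambda>p::real^3. G3 (p$1) (p$2) (p$3)) \<and>
     (\<exists>a b b'. G2 a b \<noteq> G2 a b') \<and>
     (\<exists>a b b' c. G3 a b c \<noteq> G3 a b' c) \<and>
     (\<exists>a b c c'. G3 a b c \<noteq> G3 a b c')"

end

theory Submission
  imports Defs "HOL-Real_Asymp.Real_Asymp"
begin

text \<open>Take \<open>F = 0\<close> and polynomial couplings, chosen so that the vector field is tangent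
  to the curves \<open>u \<mapsto> (u, u - 6/5 u (1 - u)\<^sup>2, u)\<close> in \<open>S\<^sub>2\<close> and
  \<open>s \<mapsto> (s, s, s + 6/5 s\<^sup>2 (1 - s))\<close> in \<open>S\<^sub>3\<close> and induces on them the logistic
  flows \<open>u' = u (1 - u)\<close> and \<open>s' = - s (1 - s)\<close>. Both curves join \<open>0\<close> to \<open>(1, 1, 1)\<close>
  and leave \<open>\<Delta>\<close> for \<open>0 < u < 1\<close>, so composing them with the logistic function gives the
  two heteroclinic connections. For symmetric \<open>G3\<close>, the linearisation at a point of \<open>\<Delta>\<close>
  has the pattern \<open>[[a, b, c], [b, a, c], [c, b, a]]\<close>, whose eigenvalues are \<open>a + b + c\<close>,
  \<open>a - b\<close> and \<open>a - c\<close>; at both equilibria these are \<open>-1, 1, -2\<close>.\<close>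

lemma vec3_eq_iff: "(x::'a^3) = y \<longleftrightarrow> x$1 = y$1 \<and> x$2 = y$2 \<and> x$3 = y$3"
  by (simp add: vec_eq_iff forall_3)

lemma has_derivative_vec3_iff:
  fixes f :: "'a::real_normed_vector \<Rightarrow> real^3"
  shows "(f has_derivative f') (at a) \<longleftrightarrow>
    (\<forall>j. ((\<lambda>x. f x $ j) has_derivative (\<lambda>h. f' h $ j)) (at a))"
  using has_derivative_componentwise_within[of f f' a UNIV]
  by (auto simp: Basis_vec_def inner_axis inner_real_def)

lemma has_vector_derivative_vector3:
  assumes "(f1 has_real_derivative d1) (at t)" "(f2 has_real_derivative d2) (at t)"
    "(f3 has_real_derivative d3) (at t)"
  shows "((\<lambda>t. vector [f1 t, f2 t, f3 t] :: real^3) has_vector_derivative vector [d1, d2, d3])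
    (at t)"
proof -
  have "(\<lambda>h. h * d) = (*) d" for d :: real
    by (auto simp: fun_eq_iff)
  with assms show ?thesis
    unfolding has_vector_derivative_def has_derivative_vec3_iff
    by (auto simp: forall_3 has_field_derivative_def)
qed

lemma has_derivative_vec_nth [derivative_intros]:
  "((\<lambda>x::real^'n. x $ i) has_derivative (\<lambda>h. h $ i)) F"
  by (rule bounded_linear_imp_has_derivative[OF bounded_linear_vec_nth])

lemma real_polynomial_function_vec_nth:
  "real_polynomial_function (\<lambda>x::real^'n. x $ i)"
  by (simp add: bounded_linear_vec_nth real_polynomial_function.intros(1))

lemma real_polynomial_function_directional_derivative:
  assumes "real_polynomial_function f"
  shows "\<exists>f'. real_polynomial_function f' \<and>
           (\<forall>x. ((\<lambda>t. f (x + t *\<^sub>R b)) has_real_derivative f' x) (at 0))"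
  using assms
proof (induction f rule: real_polynomial_function.induct)
  case (linear f)
  then show ?case
    by (intro exI[of _ "\<lambda>_. f b"]) (auto intro!: derivative_eq_intros simp: linear_simps)
next
  case (const c)
  show ?case by (intro exI[of _ "\<lambda>_. 0"]) auto
next
  case (add f g)
  then obtain f' g' where "real_polynomial_function f'" "real_polynomial_function g'"
    "\<And>x. ((\<lambda>t. f (x + t *\<^sub>R b)) has_real_derivative f' x) (at 0)"
    "\<And>x. ((\<lambda>t. g (x + t *\<^sub>R b)) has_real_derivative g' x) (at 0)"
    by blast
  then show ?case
    by (intro exI[of _ "\<lambda>x. f' x + g' x"]) (auto intro!: derivative_eq_intros)
next
  case (mult f g)
  then obtain f' g' where "real_polynomial_function f'" "real_polynomial_function g'"
    "\<And>x. ((\<lambda>t. f (x + t *\<^sub>R b)) has_real_derivative f' x) (at 0)"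
    "\<And>x. ((\<lambda>t. g (x + t *\<^sub>R b)) has_real_derivative g' x) (at 0)"
    by blast
  with mult.hyps show ?case
    by (intro exI[of _ "\<lambda>x. f' x * g x + f x * g' x"]) (auto intro!: derivative_eq_intros)
qed

lemma real_polynomial_function_smooth:
  fixes f :: "'a::euclidean_space \<Rightarrow> real"
  assumes "real_polynomial_function f"
  shows "smooth_fun f"
  unfolding smooth_fun_def
proof (intro exI[of _ "Collect real_polynomial_function"] conjI ballI)
  fix g assume "g \<in> Collect real_polynomial_function"
  then show "continuous_on UNIV g"
    by (simp add: continuous_on_polymonial_function real_polynomial_function_eq)
qed (use assms real_polynomial_function_directional_derivative in auto)

definition diag_jacobian :: "real \<Rightarrow> real \<Rightarrow> real \<Rightarrow> real^3^3" where
  "diag_jacobian a b c = vector [vector [a, b, c], vector [b, a, c], vector [c, b, a]]"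

lemma is_eigenvalue_imp_det_eq_0:
  assumes "is_eigenvalue J \<mu>"
  shows "det ((\<chi> i j. complex_of_real (J$i$j)) - mat \<mu>) = 0"
proof (rule ccontr)
  let ?A = "(\<chi> i j. complex_of_real (J$i$j)) - mat \<mu>"
  obtain v where "v \<noteq> 0" and "(\<chi> i j. complex_of_real (J$i$j)) *v v = \<mu> *s v"
    using assms unfolding is_eigenvalue_def by blast
  moreover have "mat \<mu> *v v = \<mu> *s v"
    by (simp add: vec_eq_iff matrix_vector_mult_def mat_def if_distrib[where f="\<lambda>x. x * _"]
        cong: if_cong)
  ultimately have "?A *v v = 0"
    by (simp add: matrix_vector_mult_diff_rdistrib)
  assume "det ?A \<noteq> 0"
  then obtain B where "B ** ?A = mat 1"
    by (auto simp: invertible_det_nz[symmetric] invertible_def)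
  then have "v = B *v (?A *v v)"
    by (simp add: matrix_vector_mul_assoc)
  with \<open>?A *v v = 0\<close> \<open>v \<noteq> 0\<close> show False by simp
qed

lemma is_eigenvalue_diag_jacobian:
  assumes "is_eigenvalue (diag_jacobian a b c) \<mu>"
  shows "\<mu> = a + b + c \<or> \<mu> = a - b \<or> \<mu> = a - c"
proof -
  have "det ((\<chi> i j. complex_of_real (diag_jacobian a b c $i$j)) - mat \<mu>) =
     - ((\<mu> - (a + b + c)) * (\<mu> - (a - b)) * (\<mu> - (a - c)))"
    by (simp add: det_3 diag_jacobian_def mat_def) algebra
  with is_eigenvalue_imp_det_eq_0[OF assms] show ?thesis
    by (simp del: of_real_add of_real_diff)
qed

lemma hyperbolic_equilibrium_diag_jacobian:
  assumes "V \<xi> = 0" "(V has_derivative (\<lambda>h. diag_jacobian a b c *v h)) (at \<xi>)"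
    and "a + b + c \<noteq> 0" "a \<noteq> b" "a \<noteq> c"
  shows "hyperbolic_equilibrium V \<xi>"
  unfolding hyperbolic_equilibrium_def
  using assms is_eigenvalue_diag_jacobian by fastforce

lemma dyn_invariant_Diag_S2_S3:
  assumes "\<forall>a b c. G3 a b c = G3 a c b"
  shows "dyn_invariant (hvf F G2 G3) Diag \<and> dyn_invariant (hvf F G2 G3) S2 \<and>
    dyn_invariant (hvf F G2 G3) S3"
  using assms unfolding dyn_invariant_def Diag_def S2_def S3_def hvf_def by auto

lemma heteroclinic_along_curve:
  assumes curve: "\<And>u. (\<gamma> has_vector_derivative \<gamma>' u) (at u)"
    and tangent: "\<And>u. V (\<gamma> u) = g u *\<^sub>R \<gamma>' u"
    and flow: "\<And>t. (s has_real_derivative g (s t)) (at t)"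
    and "(s \<longlongrightarrow> a) at_bot" "(s \<longlongrightarrow> b) at_top"
  shows "heteroclinic V (\<gamma> a) (\<gamma> b) (\<gamma> \<circ> s)"
proof -
  have "((\<gamma> \<circ> s) has_vector_derivative V ((\<gamma> \<circ> s) t)) (at t)" for t
    using vector_diff_chain_at[OF flow[unfolded has_real_derivative_iff_has_vector_derivative]
        curve]
    by (simp add: tangent)
  moreover have "isCont \<gamma> u" for u
    using curve has_vector_derivative_continuous by blast
  ultimately show ?thesis
    unfolding heteroclinic_def is_solution_def comp_def
    using assms(4,5) by (auto intro: isCont_tendsto_compose)
qed

definition logistic :: "real \<Rightarrow> real" where
  "logistic t = 1 / (1 + exp (- t))"

lemma logistic_has_real_derivative:
  "(logistic has_real_derivative logistic t * (1 - logistic t)) (at t)"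
proof -
  have "1 + exp (- t) \<noteq> 0"
    by (metis add_pos_pos exp_gt_zero less_irrefl zero_less_one)
  then show ?thesis
    unfolding logistic_def[abs_def]
    by (auto intro!: derivative_eq_intros simp: field_simps power2_eq_square)
qed

lemma logistic_bounds: "0 < logistic t" "logistic t < 1"
  unfolding logistic_def by (simp_all add: add_pos_pos)

lemma logistic_at_bot: "(logistic \<longlongrightarrow> 0) at_bot"
  and logistic_at_top: "(logistic \<longlongrightarrow> 1) at_top"
  unfolding logistic_def[abs_def] by real_asymp+

definition coupling2 :: "real \<Rightarrow> real \<Rightarrow> real" where
 "coupling2 x y = (1/5) * (- 15*y + 140*y^2 + 15*x - 166*x*y + 150*x*y^2 + 26*x^2 - 372*x^2*y + 222*x^3 - 192*x^3*y + 192*x^4 + 180*x^4*y - 180*x^5)"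

definition coupling3 :: "real \<Rightarrow> real \<Rightarrow> real \<Rightarrow> real" where
 "coupling3 x y z = (1/30) * (40*z - 420*z^2 + 40*y + 162*y*z + 96*y*z^2 - 135*y*z^3 + 27*y*z^4 - 420*y^2 + 96*y^2*z - 270*y^2*z^2 + 81*y^2*z^3 - 135*y^3*z + 81*y^3*z^2 + 27*y^4*z - 110*x + 408*x*z - 96*x*z^2 + 135*x*z^3 - 27*x*z^4 + 408*x*y - 528*x*y*z - 135*x*y*z^2 - 96*x*y^2 - 135*x*y^2*z + 54*x*y^2*z^2 + 135*x*y^3 - 27*x*y^4 - 156*x^2 + 1116*x^2*z + 405*x^2*z^2 - 81*x^2*z^3 + 1116*x^2*y - 810*x^2*y*z + 81*x^2*y*z^2 + 405*x^2*y^2 + 81*x^2*y^2*z - 81*x^2*y^3 - 1332*x^3 + 576*x^3*z - 216*x^3*z^2 + 576*x^3*y + 432*x^3*y*z - 216*x^3*y^2 - 1152*x^4 - 540*x^4*z - 540*x^4*y + 1080*x^5)"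

abbreviation cycle_field :: "state \<Rightarrow> state" where
  "cycle_field \<equiv> hvf (\<lambda>_. 0) coupling2 coupling3"

lemma coupling3_sym: "coupling3 a b c = coupling3 a c b"
  unfolding coupling3_def by algebra

lemma admissible_cycle_field: "admissible (\<lambda>_. 0) coupling2 coupling3"
proof -
  note polynomial_intros = real_polynomial_function.intros(2-4) real_polynomial_function_vec_nth
    real_polynomial_function_diff real_polynomial_function_minus real_polynomial_function_power
    real_polynomial_function_divide
  have "smooth_fun (\<lambda>p::real^2. coupling2 (p$1) (p$2))"
    unfolding coupling2_def by (intro real_polynomial_function_smooth polynomial_intros)
  moreover have "smooth_fun (\<lambda>p::real^3. coupling3 (p$1) (p$2) (p$3))"
    unfolding coupling3_def by (intro real_polynomial_function_smooth polynomial_intros)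
  moreover have "coupling2 0 0 \<noteq> coupling2 0 1" "coupling3 0 0 0 \<noteq> coupling3 0 1 0"
    by (simp_all add: coupling2_def coupling3_def)
  ultimately show ?thesis
    unfolding admissible_def
    using real_polynomial_function_smooth[of "\<lambda>_::real. 0"] coupling3_sym by fastforce
qed

lemma cycle_field_has_derivative_0:
  "(cycle_field has_derivative (\<lambda>h. diag_jacobian (-2/3) (-5/3) (4/3) *v h)) (at 0)"
  unfolding has_derivative_vec3_iff
  unfolding forall_3 hvf_def vector_3 coupling2_def coupling3_def
  by (intro conjI; rule has_derivative_eq_rhs, (rule derivative_intros)+)
    (auto simp: fun_eq_iff matrix_vector_mult_def sum_3 diag_jacobian_def field_simps)

lemma cycle_field_has_derivative_1:
  "(cycle_field has_derivative (\<lambda>h. diag_jacobian (-2/3) (4/3) (-5/3) *v h)) (at 1)"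
  unfolding has_derivative_vec3_iff
  unfolding forall_3 hvf_def vector_3 coupling2_def coupling3_def
  by (intro conjI; rule has_derivative_eq_rhs, (rule derivative_intros)+)
    (auto simp: fun_eq_iff matrix_vector_mult_def sum_3 diag_jacobian_def field_simps)

definition curve_S2 :: "real \<Rightarrow> state" where
  "curve_S2 u = vector [u, u - 6/5 * u * (1 - u)^2, u]"

definition curve_S3 :: "real \<Rightarrow> state" where
  "curve_S3 s = vector [s, s, s + 6/5 * s^2 * (1 - s)]"

lemma curve_S2_in: "0 < u \<Longrightarrow> u < 1 \<Longrightarrow> curve_S2 u \<in> S2 - Diag"
  by (simp add: curve_S2_def S2_def Diag_def)

lemma curve_S3_in: "0 < s \<Longrightarrow> s < 1 \<Longrightarrow> curve_S3 s \<in> S3 - Diag"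
  by (simp add: curve_S3_def S3_def Diag_def)

lemma heteroclinic_curve_S2: "heteroclinic cycle_field 0 1 (curve_S2 \<circ> logistic)"
proof -
  define \<tau> where
    "\<tau> u = (vector [1, 1 - 6/5 * ((1 - u)^2 - 2 * u * (1 - u)), 1] :: state)" for u
  have "(curve_S2 has_vector_derivative \<tau> u) (at u)" for u
    unfolding curve_S2_def[abs_def] \<tau>_def
    by (intro has_vector_derivative_vector3)
      (auto intro!: derivative_eq_intros simp: field_simps power2_eq_square)
  moreover have "cycle_field (curve_S2 u) = (u * (1 - u)) *\<^sub>R \<tau> u" for u
    unfolding vec3_eq_iff
    by (simp add: hvf_def curve_S2_def \<tau>_def coupling2_def coupling3_def; algebra)
  moreover have "curve_S2 0 = 0" "curve_S2 1 = 1"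
    by (simp_all add: curve_S2_def vec3_eq_iff)
  ultimately show ?thesis
    using heteroclinic_along_curve[of curve_S2 \<tau> cycle_field "\<lambda>u. u * (1 - u)" logistic 0 1]
      logistic_has_real_derivative logistic_at_bot logistic_at_top by simp
qed

lemma heteroclinic_curve_S3: "heteroclinic cycle_field 1 0 (curve_S3 \<circ> (\<lambda>t. logistic (- t)))"
proof -
  define \<tau> where "\<tau> s = (vector [1, 1, 1 + 6/5 * (2 * s * (1 - s) - s^2)] :: state)" for s
  have "(curve_S3 has_vector_derivative \<tau> s) (at s)" for s
    unfolding curve_S3_def[abs_def] \<tau>_def
    by (intro has_vector_derivative_vector3)
      (auto intro!: derivative_eq_intros simp: power2_eq_square)
  moreover have "cycle_field (curve_S3 s) = (- (s * (1 - s))) *\<^sub>R \<tau> s" for s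
    unfolding vec3_eq_iff
    by (simp add: hvf_def curve_S3_def \<tau>_def coupling2_def coupling3_def; algebra)
  moreover have "((\<lambda>t. logistic (- t)) has_real_derivative
      - (logistic (- t) * (1 - logistic (- t)))) (at t)" for t
    using DERIV_chain'[OF DERIV_minus[OF DERIV_ident] logistic_has_real_derivative] by simp
  moreover have "((\<lambda>t. logistic (- t)) \<longlongrightarrow> 1) at_bot" "((\<lambda>t. logistic (- t)) \<longlongrightarrow> 0) at_top"
    unfolding logistic_def by real_asymp+
  moreover have "curve_S3 0 = 0" "curve_S3 1 = 1"
    by (simp_all add: curve_S3_def vec3_eq_iff)
  ultimately show ?thesis
    using heteroclinic_along_curve[of curve_S3 \<tau> cycle_field "\<lambda>s. - (s * (1 - s))"
        "\<lambda>t. logistic (- t)" 1 0]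
    by simp
qed

theorem mainTheorem12:
  shows "(\<forall>F G2 G3. admissible F G2 G3 \<and> (\<forall>a b c. G3 a b c = G3 a c b) \<longrightarrow>
            dyn_invariant (hvf F G2 G3) Diag \<and> dyn_invariant (hvf F G2 G3) S2 \<and>
            dyn_invariant (hvf F G2 G3) S3)
       \<and> (\<exists>F G2 G3. admissible F G2 G3 \<and> (\<forall>a b c. G3 a b c = G3 a c b) \<and>
            (\<exists>\<xi>1 \<xi>2 x y. \<xi>1 \<in> Diag \<and> \<xi>2 \<in> Diag \<and> \<xi>1 \<noteq> \<xi>2 \<and>
               hyperbolic_equilibrium (hvf F G2 G3) \<xi>1 \<and>
               hyperbolic_equilibrium (hvf F G2 G3) \<xi>2 \<and>
               heteroclinic (hvf F G2 G3) \<xi>1 \<xi>2 x \<and> (\<forall>t. x t \<in> S2 - Diag) \<and>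
               heteroclinic (hvf F G2 G3) \<xi>2 \<xi>1 y \<and> (\<forall>t. y t \<in> S3 - Diag)))"
proof -
  have "hyperbolic_equilibrium cycle_field 0" "hyperbolic_equilibrium cycle_field 1"
    by (auto intro!: hyperbolic_equilibrium_diag_jacobian cycle_field_has_derivative_0
        cycle_field_has_derivative_1 simp: hvf_def vec3_eq_iff coupling2_def coupling3_def)
  moreover have "(0::state) \<in> Diag" "(1::state) \<in> Diag" "(0::state) \<noteq> 1"
    by (simp_all add: Diag_def vec3_eq_iff)
  moreover have "(curve_S2 \<circ> logistic) t \<in> S2 - Diag"
    "(curve_S3 \<circ> (\<lambda>t. logistic (- t))) t \<in> S3 - Diag" for t
    using curve_S2_in[OF logistic_bounds] curve_S3_in[OF logistic_bounds] by simp_all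
  ultimately show ?thesis
    using dyn_invariant_Diag_S2_S3 admissible_cycle_field coupling3_sym
      heteroclinic_curve_S2 heteroclinic_curve_S3 by blast
qed

end
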